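(* For $i=1,\dots,d$ let $\omega_i\subseteq\mathbb{R}$ be a nonempty open interval and $f_i:\omega_i\to\mathbb{R}$ a univariate function of Legendre type. Let $\Omega'\subseteq\prod_{i=1}^d\omega_i$ be a nonempty open convex set and let $D'_F$ be the decomposable Bregman divergence on $\Omega'\times\Omega'$ generated by $F(x)=\sum_{i=1}^d f_i(x_i)$, i.e. $D'_F(x\|y)=F(x)-F(y)-\langle\nabla F(y),x-y\rangle$ for $x,y\in\Omega'$. Then $D'_F$ is the restriction to $\Omega'\times\Omega'$ of a Bregman divergence (generated by a function of Legendre type) defined on the axis-aligned box $\Omega=\prod_{i=1}^d\omega_i$.
   Context: A function $G:U\to\mathbb{R}$ on a nonempty open convex set $U\subseteq\mathbb{R}^k$ is of Legendre type if (I) it is differentiable, (II) it is strictly convex, and (III) if $\partial U$ is nonempty, then $\|\nabla G(x)\|\to\infty$ as $x\to\partial U$. The Bregman divergence generated by $G$ is $D_G(x\|y)=G(x)-G(y)-\langle\nabla G(y),x-y\rangle$ on $U\times U$. A decomposable Bregman divergence is one generated by $F(x)=\sum_{i=1}^d f_i(x_i)$ with each $f_i$ a univariate function of Legendre type; then $D_F(x\|y)=\sum_i D_{f_i}(x_i\|y_i)$. *)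

theory Defs
  imports "HOL-Analysis.Analysis"
begin

definition strictly_convex_on :: "'a::real_vector set \<Rightarrow> ('a \<Rightarrow> real) \<Rightarrow> bool" where
  "strictly_convex_on S G \<longleftrightarrow> convex S \<and>
     (\<forall>x\<in>S. \<forall>y\<in>S. x \<noteq> y \<longrightarrow> (\<forall>t::real. 0 < t \<and> t < 1 \<longrightarrow>
        G ((1 - t) *\<^sub>R x + t *\<^sub>R y) < (1 - t) * G x + t * G y))"

definition grad :: "('a::euclidean_space \<Rightarrow> real) \<Rightarrow> 'a \<Rightarrow> 'a" where
  "grad G x = (SOME g. (G has_derivative (\<lambda>h. g \<bullet> h)) (at x))"

definition legendre_type :: "'a::euclidean_space set \<Rightarrow> ('a \<Rightarrow> real) \<Rightarrow> bool" where
  "legendre_type U G \<longleftrightarrow>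
     U \<noteq> {} \<and> open U \<and> convex U \<and>
     (\<forall>x\<in>U. G differentiable (at x)) \<and>
     strictly_convex_on U G \<and>
     (\<forall>z\<in>frontier U. filterlim (\<lambda>x. norm (grad G x)) at_top (at z within U))"

definition bregman :: "('a::euclidean_space \<Rightarrow> real) \<Rightarrow> 'a \<Rightarrow> 'a \<Rightarrow> real" where
  "bregman G x y = G x - G y - grad G y \<bullet> (x - y)"

end

theory Submission
  imports Defs
begin

text \<open>A decomposable \<open>F(x) = \<Sum>\<^sub>i f\<^sub>i(x\<^sub>i)\<close> is itself of Legendre type on the whole box
  \<open>\<Omega> = \<Prod>\<^sub>i \<omega>\<^sub>i\<close>, so \<open>G = F\<close> extends \<open>D'\<^sub>F\<close> whatever \<open>\<Omega>'\<close> is. Strict convexity of \<open>F\<close> comes from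
  strict convexity of \<open>f\<^sub>j\<close> in a coordinate \<open>j\<close> where the two points differ. The gradient
  of \<open>F\<close> is \<open>(f\<^sub>i'(x\<^sub>i))\<^sub>i\<close>, and a boundary point \<open>z\<close> of the box has some coordinate
  \<open>z\<^sub>i\<close> on the boundary of \<open>\<omega>\<^sub>i\<close>; there \<open>|f\<^sub>i'|\<close>, and with it \<open>\<parallel>\<nabla>F\<parallel>\<close>, blows up.\<close>

lemma grad_eqI:
  fixes G :: "'a::euclidean_space \<Rightarrow> real"
  assumes "(G has_derivative (\<lambda>h. g \<bullet> h)) (at x)"
  shows "grad G x = g"
proof -
  have "(G has_derivative (\<lambda>h. grad G x \<bullet> h)) (at x)"
    unfolding grad_def by (rule someI[of _ g]) (rule assms)
  then have "(\<lambda>h. grad G x \<bullet> h) = (\<lambda>h. g \<bullet> h)"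
    using assms by (rule has_derivative_unique)
  then have "(grad G x - g) \<bullet> (grad G x - g) = 0"
    by (metis inner_diff_left right_minus_eq)
  then show ?thesis by simp
qed

lemma has_derivative_grad_real:
  fixes f :: "real \<Rightarrow> real"
  assumes "f differentiable at t"
  shows "(f has_derivative (\<lambda>h. grad f t * h)) (at t)"
proof -
  have "(f has_real_derivative deriv f t) (at t)"
    using assms by (rule DERIV_deriv_iff_real_differentiable[THEN iffD2])
  then have "(f has_derivative (\<lambda>h. deriv f t * h)) (at t)"
    unfolding has_field_derivative_def .
  moreover from this have "grad f t = deriv f t"
    by (intro grad_eqI) (simp add: inner_real_def)
  ultimately show ?thesis by simp
qed

lemma vector_box_nonempty:
  assumes "\<And>i. S i \<noteq> {}"
  shows "{x :: 'a ^ 'n. \<forall>i. x $ i \<in> S i} \<noteq> {}"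
proof -
  have "(\<chi> i. SOME t. t \<in> S i) \<in> {x. \<forall>i. x $ i \<in> S i}"
    using assms by (simp add: some_in_eq)
  then show ?thesis by blast
qed

lemma convex_vector_box:
  fixes S :: "'n::finite \<Rightarrow> 'a::real_vector set"
  assumes "\<And>i. convex (S i)"
  shows "convex {x :: 'a ^ 'n. \<forall>i. x $ i \<in> S i}"
  using assms unfolding convex_def by simp

lemma frontier_vector_box_nth:
  fixes S :: "'n::finite \<Rightarrow> 'a::topological_space set"
  assumes "\<And>i. open (S i)" and "z \<in> frontier {x. \<forall>i. x $ i \<in> S i}"
  obtains i where "z $ i \<in> frontier (S i)"
proof -
  let ?B = "{x. \<forall>i. x $ i \<in> S i}"
  have "open ?B" using assms(1) by (simp add: open_vector_box)
  then have z: "z \<in> closure ?B" "z \<notin> ?B"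
    using assms(2) by (auto simp: frontier_def interior_open)
  then obtain i where i: "z $ i \<notin> S i" by auto
  have "(\<lambda>x. x $ i) ` closure ?B \<subseteq> closure (S i)"
    by (rule image_closure_subset) (auto intro!: continuous_intros closure_subset[THEN subsetD])
  with z i assms(1) have "z $ i \<in> frontier (S i)"
    by (auto simp: frontier_def interior_open)
  then show ?thesis by (rule that)
qed

lemma has_derivative_decomposable_sum:
  fixes f :: "'n::finite \<Rightarrow> real \<Rightarrow> real"
  assumes "\<And>i. f i differentiable at (x $ i)"
  shows "((\<lambda>z. \<Sum>i\<in>UNIV. f i (z $ i)) has_derivative (\<lambda>h. (\<chi> i. grad (f i) (x $ i)) \<bullet> h)) (at x)"
proof -
  have "((\<lambda>z. f i (z $ i)) has_derivative (\<lambda>h. grad (f i) (x $ i) * h $ i)) (at x)" for i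
    using has_derivative_compose[OF bounded_linear_imp_has_derivative[OF bounded_linear_vec_nth]
        has_derivative_grad_real[OF assms]] .
  then have "((\<lambda>z. \<Sum>i\<in>UNIV. f i (z $ i)) has_derivative
      (\<lambda>h. \<Sum>i\<in>UNIV. grad (f i) (x $ i) * h $ i)) (at x)"
    by (intro has_derivative_sum)
  then show ?thesis by (simp add: inner_vec_def inner_real_def)
qed

lemma grad_decomposable_sum:
  fixes f :: "'n::finite \<Rightarrow> real \<Rightarrow> real"
  assumes "\<And>i. f i differentiable at (x $ i)"
  shows "grad (\<lambda>z. \<Sum>i\<in>UNIV. f i (z $ i)) x = (\<chi> i. grad (f i) (x $ i))"
  using assms by (intro grad_eqI has_derivative_decomposable_sum)

lemma strictly_convex_on_decomposable_sum:
  fixes f :: "'n::finite \<Rightarrow> real \<Rightarrow> real"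
  assumes "\<And>i. strictly_convex_on (S i) (f i)"
  shows "strictly_convex_on {x. \<forall>i. x $ i \<in> S i} (\<lambda>x. \<Sum>i\<in>UNIV. f i (x $ i))"
  unfolding strictly_convex_on_def
proof (intro conjI ballI impI allI)
  show "convex {x :: real ^ 'n. \<forall>i. x $ i \<in> S i}"
    using assms by (intro convex_vector_box) (simp add: strictly_convex_on_def)
  fix x y :: "real ^ 'n" and t :: real
  assume x: "x \<in> {x. \<forall>i. x $ i \<in> S i}" and y: "y \<in> {x. \<forall>i. x $ i \<in> S i}"
    and "x \<noteq> y" and t: "0 < t \<and> t < 1"
  then obtain j where j: "x $ j \<noteq> y $ j" by (auto simp: vec_eq_iff)
  have strict: "f i ((1 - t) * x $ i + t * y $ i) < (1 - t) * f i (x $ i) + t * f i (y $ i)"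
    if "x $ i \<noteq> y $ i" for i
    using assms[of i] x y t that unfolding strictly_convex_on_def by auto
  have le: "f i ((1 - t) * x $ i + t * y $ i) \<le> (1 - t) * f i (x $ i) + t * f i (y $ i)" for i
    using strict[of i] by (cases "x $ i = y $ i") (auto simp: algebra_simps)
  have "(\<Sum>i\<in>UNIV. f i (((1 - t) *\<^sub>R x + t *\<^sub>R y) $ i))
      = (\<Sum>i\<in>UNIV. f i ((1 - t) * x $ i + t * y $ i))"
    by simp
  also have "\<dots> < (\<Sum>i\<in>UNIV. (1 - t) * f i (x $ i) + t * f i (y $ i))"
    using le strict[OF j] by (intro sum_strict_mono_ex1) auto
  also have "\<dots> = (1 - t) * (\<Sum>i\<in>UNIV. f i (x $ i)) + t * (\<Sum>i\<in>UNIV. f i (y $ i))"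
    by (simp add: sum.distrib sum_distrib_left)
  finally show "(\<Sum>i\<in>UNIV. f i (((1 - t) *\<^sub>R x + t *\<^sub>R y) $ i))
      < (1 - t) * (\<Sum>i\<in>UNIV. f i (x $ i)) + t * (\<Sum>i\<in>UNIV. f i (y $ i))" .
qed

lemma filterlim_norm_grad_decomposable_sum_at_frontier:
  fixes f :: "'n::finite \<Rightarrow> real \<Rightarrow> real"
  assumes leg: "\<And>i. legendre_type (S i) (f i)"
    and z: "z \<in> frontier {x. \<forall>i. x $ i \<in> S i}"
  shows "filterlim (\<lambda>x. norm (grad (\<lambda>z. \<Sum>i\<in>UNIV. f i (z $ i)) x)) at_top
           (at z within {x. \<forall>i. x $ i \<in> S i})"
proof -
  let ?B = "{x. \<forall>i. x $ i \<in> S i}"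
  have S_open: "open (S i)" for i using leg[of i] by (simp add: legendre_type_def)
  obtain i where i: "z $ i \<in> frontier (S i)" by (rule frontier_vector_box_nth[OF S_open z])
  then have "z $ i \<notin> S i"
    using S_open[of i] by (simp add: frontier_def interior_open)
  then have "filterlim (\<lambda>x. x $ i) (at (z $ i) within S i) (at z within ?B)"
    by (intro filterlim_at_withinI tendsto_intros)
      (auto simp: eventually_at_filter intro!: always_eventually)
  moreover have "filterlim (\<lambda>t. norm (grad (f i) t)) at_top (at (z $ i) within S i)"
    using leg[of i] i by (simp add: legendre_type_def)
  ultimately have lim: "filterlim (\<lambda>x. norm (grad (f i) (x $ i))) at_top (at z within ?B)"
    by (rule filterlim_compose[rotated])
  have bound: "norm (grad (f i) (x $ i)) \<le> norm (grad (\<lambda>z. \<Sum>i\<in>UNIV. f i (z $ i)) x)"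
    if "x \<in> ?B" for x
  proof -
    have "\<And>j. f j differentiable at (x $ j)"
      using leg that by (simp add: legendre_type_def)
    then show ?thesis
      using Finite_Cartesian_Product.norm_nth_le[where x="grad (\<lambda>z. \<Sum>i\<in>UNIV. f i (z $ i)) x" and i=i]
      by (simp add: grad_decomposable_sum)
  qed
  show ?thesis
    by (rule filterlim_at_top_mono[OF lim])
      (use bound in \<open>auto simp: eventually_at_filter intro!: always_eventually\<close>)
qed

lemma legendre_type_decomposable_sum:
  fixes f :: "'n::finite \<Rightarrow> real \<Rightarrow> real"
  assumes leg: "\<And>i. legendre_type (S i) (f i)"
  shows "legendre_type {x. \<forall>i. x $ i \<in> S i} (\<lambda>x. \<Sum>i\<in>UNIV. f i (x $ i))"
proof -
  have S: "S i \<noteq> {}" "open (S i)" "convex (S i)" "strictly_convex_on (S i) (f i)"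
    "\<forall>t\<in>S i. f i differentiable at t" for i
    using leg[of i] by (auto simp: legendre_type_def)
  have "(\<lambda>z. \<Sum>i\<in>UNIV. f i (z $ i)) differentiable at x" if "\<forall>i. x $ i \<in> S i" for x
    using has_derivative_decomposable_sum[of f x] S(5) that by (auto intro: differentiableI)
  then show ?thesis
    unfolding legendre_type_def
    using S(1-4) vector_box_nonempty[of S] filterlim_norm_grad_decomposable_sum_at_frontier[of S f, OF leg]
    by (simp add: open_vector_box convex_vector_box strictly_convex_on_decomposable_sum)
qed

theorem lemma4:
  fixes \<omega> :: "'n::finite \<Rightarrow> real set"
    and f :: "'n \<Rightarrow> real \<Rightarrow> real"
    and \<Omega>' :: "(real ^ 'n) set"
  assumes intervals: "\<And>i. is_interval (\<omega> i) \<and> open (\<omega> i) \<and> \<omega> i \<noteq> {}"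
    and leg: "\<And>i. legendre_type (\<omega> i) (f i)"
    and sub: "\<Omega>' \<subseteq> {x. \<forall>i. x $ i \<in> \<omega> i}"
    and ne: "\<Omega>' \<noteq> {}" and op: "open \<Omega>'" and cv: "convex \<Omega>'"
  shows "\<exists>G :: real ^ 'n \<Rightarrow> real.
           legendre_type {x. \<forall>i. x $ i \<in> \<omega> i} G \<and>
           (\<forall>x\<in>\<Omega>'. \<forall>y\<in>\<Omega>'.
              bregman (\<lambda>z. \<Sum>i\<in>UNIV. f i (z $ i)) x y = bregman G x y)"
  using legendre_type_decomposable_sum[of \<omega> f, OF leg] by blast

end
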